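(* Let $\eta_1,\dots,\eta_{d-1}$ satisfy $0<\eta_l<\zeta_l(\mu)$ for all $l$, and put $\eta=\min_{1\le l\le d-1}w_l\eta_l$. Then there is a constant $C>0$ such that for all $1\le l\le d-1$, $r\in\Xi$, $t>1$ and every nonzero decomposable $v=v_1\wedge\dots\wedge v_l\in V_l$, $$\int_{M_{m\times n}(\mathbb R)}\|g_tu(x)v\|^{-\eta_l}\,d\mu^{(r)}(x)\le C\,t^{-\eta}\|v\|^{-\eta_l}.$$
   Context: Let $m,n\ge1$, $d=m+n$, $a_1\ge\dots\ge a_m>0$, $b_1\ge\dots\ge b_n>0$, $\sum a_i=\sum b_j=1$. For $t>0$, $g_t=\mathrm{diag}(t^{a_1},\dots,t^{a_m},t^{-b_1},\dots,t^{-b_n})$; $u(\theta)=\begin{pmatrix}I_m&\theta\\0&I_n\end{pmatrix}$. For $1\le l\le d-1$, $w_l=a_m+\dots+a_{m+1-l}$ if $l\le m$ and $w_l=1-(b_1+\dots+b_{l-m})$ if $l>m$. $V_l=\bigwedge^l\mathbb R^d$ with $g$ acting by $\wedge^lg$; with $e_I=e_{i_1}\wedge\dots\wedge e_{i_l}$, write $v=\sum v_Ie_I$, $\|v\|=\max_I|v_I|$. $V_l^+=\mathrm{span}\{e_I:\#(I\cap\{1,\dots,m\})=\min\{l,m\}\}$, $\pi_{l+}$ the projection onto $V_l^+$ along the span of the other $e_I$. For each $i,j$, $\Phi_{ij}$ is a finite IFS on $\mathbb R$ of maps $x\mapsto c_{ij}x+w_{ij,e}$ with common ratio $c_{ij}\in(0,1)$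 satisfying the open set condition, with limit set $\mathcal K_{ij}$ of dimension $s_{ij}>0$; $\mu_{ij}$ is the normalised $s_{ij}$-dimensional Hausdorff measure on $\mathcal K_{ij}$, $\mu=\bigotimes\mu_{ij}$; $\Xi=\{r\in M_{m\times n}(\mathbb R):r_{ij}\in[c_{ij},c_{ij}^{-1}]\}$ and $\mu^{(r)}=\bigotimes\mu^{(r)}_{ij}$ with $\mu^{(r)}_{ij}$ the pushforward of $\mu_{ij}$ by $x\mapsto r_{ij}x$. The critical exponent $\zeta_l(\mu)$ is the supremum of $\gamma\ge0$ such that for some $C>0$, $\int\|\pi_{l+}(u(\theta)v)\|^{-\gamma}d\mu^{(r)}(\theta)<C$ for all decomposable $v\in V_l$ with $\|v\|=1$ and all $r\in\Xi$. *)

theory Defs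
  imports "HOL-Probability.Probability" "Jordan_Normal_Form.Determinant" "Jordan_Normal_Form.DL_Submatrix"
begin

definition hausdorff_pre :: "real \<Rightarrow> real \<Rightarrow> real set \<Rightarrow> ennreal" where
  "hausdorff_pre s \<delta> A =
     (INF U \<in> {U :: nat \<Rightarrow> real set. A \<subseteq> (\<Union>i. U i) \<and> (\<forall>i. bounded (U i) \<and> diameter (U i) \<le> \<delta>)}.
        (\<Sum>i. ennreal (diameter (U i) powr s)))"

definition hausdorff_outer :: "real \<Rightarrow> real set \<Rightarrow> ennreal" where
  "hausdorff_outer s A = (SUP \<delta> \<in> {0<..}. hausdorff_pre s \<delta> A)"

definition hausdorff_dim :: "real set \<Rightarrow> real" where
  "hausdorff_dim A = Inf {s. 0 \<le> s \<and> hausdorff_outer s A = 0}"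

definition hausdorff_prob :: "real \<Rightarrow> real set \<Rightarrow> real measure" where
  "hausdorff_prob s K = measure_of UNIV (sets borel) (\<lambda>A. hausdorff_outer s (A \<inter> K) / hausdorff_outer s K)"

text \<open>The IFS is given by its common ratio c and the finite set W of translation parts:
  maps x \<mapsto> c x + w, w \<in> W.\<close>
definition ifs_map :: "real \<Rightarrow> real \<Rightarrow> real \<Rightarrow> real" where
  "ifs_map c w x = c * x + w"

definition open_set_condition :: "real \<Rightarrow> real set \<Rightarrow> bool" where
  "open_set_condition c W \<longleftrightarrow>
     (\<exists>U. open U \<and> U \<noteq> {} \<and> (\<forall>w\<in>W. ifs_map c w ` U \<subseteq> U) \<and>
          (\<forall>w\<in>W. \<forall>w'\<in>W. w \<noteq> w' \<longrightarrow> ifs_map c w ` U \<inter> ifs_map c w' ` U = {}))"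

definition is_limit_set :: "real \<Rightarrow> real set \<Rightarrow> real set \<Rightarrow> bool" where
  "is_limit_set c W K \<longleftrightarrow> compact K \<and> K \<noteq> {} \<and> K = (\<Union>w\<in>W. ifs_map c w ` K)"

section \<open>Matrices and exterior powers (0-based indices, d = m + n)\<close>

text \<open>Vectors of V_l are functions on l-subsets of {0..<d}; v I is the coefficient of e_I.\<close>
definition lsubsets :: "nat \<Rightarrow> nat \<Rightarrow> nat set set" where
  "lsubsets d l = {I. I \<subseteq> {0..<d} \<and> card I = l}"

definition ext_norm :: "nat \<Rightarrow> nat \<Rightarrow> (nat set \<Rightarrow> real) \<Rightarrow> real" where
  "ext_norm d l v = Max ((\<lambda>I. \<bar>v I\<bar>) ` lsubsets d l)"

text \<open>action of \<wedge>^l A on V_l: coefficient of e_I in (\<wedge>^l A) v\<close>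
definition ext_act :: "nat \<Rightarrow> nat \<Rightarrow> real mat \<Rightarrow> (nat set \<Rightarrow> real) \<Rightarrow> (nat set \<Rightarrow> real)" where
  "ext_act d l A v = (\<lambda>I. if I \<in> lsubsets d l then (\<Sum>J\<in>lsubsets d l. det (submatrix A I J) * v J) else 0)"

text \<open>v_1 \<wedge> ... \<wedge> v_l, where the v_k are the columns of the d x l matrix V\<close>
definition wedge :: "nat \<Rightarrow> nat \<Rightarrow> real mat \<Rightarrow> (nat set \<Rightarrow> real)" where
  "wedge d l V = (\<lambda>I. if I \<in> lsubsets d l then det (submatrix V I {0..<l}) else 0)"

text \<open>projection onto V_l^+ along the other basis vectors\<close>
definition proj_plus :: "nat \<Rightarrow> nat \<Rightarrow> nat \<Rightarrow> (nat set \<Rightarrow> real) \<Rightarrow> (nat set \<Rightarrow> real)" where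
  "proj_plus m d l v = (\<lambda>I. if card (I \<inter> {0..<m}) = min l m then v I else 0)"

definition u_mat :: "nat \<Rightarrow> nat \<Rightarrow> (nat \<times> nat \<Rightarrow> real) \<Rightarrow> real mat" where
  "u_mat m n \<theta> = mat (m + n) (m + n)
     (\<lambda>(p, q). if p = q then 1 else if p < m \<and> m \<le> q then \<theta> (p, q - m) else 0)"

definition g_mat :: "nat \<Rightarrow> nat \<Rightarrow> (nat \<Rightarrow> real) \<Rightarrow> (nat \<Rightarrow> real) \<Rightarrow> real \<Rightarrow> real mat" where
  "g_mat m n a b t = mat (m + n) (m + n)
     (\<lambda>(p, q). if p = q then (if p < m then t powr a p else t powr (- b (p - m))) else 0)"

text \<open>the weights w_l (a, b indexed from 0)\<close>
definition wl :: "nat \<Rightarrow> (nat \<Rightarrow> real) \<Rightarrow> (nat \<Rightarrow> real) \<Rightarrow> nat \<Rightarrow> real" where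
  "wl m a b l = (if l \<le> m then (\<Sum>i\<in>{m - l..<m}. a i) else 1 - (\<Sum>j<l - m. b j))"

definition inv_pow :: "real \<Rightarrow> real \<Rightarrow> ennreal" where
  "inv_pow x \<gamma> = (if x = 0 then \<infinity> else ennreal (x powr (- \<gamma>)))"

definition Xi :: "nat \<Rightarrow> nat \<Rightarrow> (nat \<Rightarrow> nat \<Rightarrow> real) \<Rightarrow> (nat \<Rightarrow> nat \<Rightarrow> real) set" where
  "Xi m n c = {r. \<forall>i<m. \<forall>j<n. c i j \<le> r i j \<and> r i j \<le> 1 / c i j}"

text \<open>\<mu>^(r) on M_{m x n}(R), matrices being functions on {0..<m} x {0..<n}\<close>
definition mu_r :: "nat \<Rightarrow> nat \<Rightarrow> (nat \<Rightarrow> nat \<Rightarrow> real measure) \<Rightarrow> (nat \<Rightarrow> nat \<Rightarrow> real)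
                     \<Rightarrow> (nat \<times> nat \<Rightarrow> real) measure" where
  "mu_r m n \<mu> r = PiM ({0..<m} \<times> {0..<n}) (\<lambda>(i, j). distr (\<mu> i j) borel (\<lambda>x. r i j * x))"

definition crit_exp :: "nat \<Rightarrow> nat \<Rightarrow> (nat \<Rightarrow> nat \<Rightarrow> real) \<Rightarrow> (nat \<Rightarrow> nat \<Rightarrow> real measure) \<Rightarrow> nat \<Rightarrow> ereal" where
  "crit_exp m n c \<mu> l = Sup (ereal ` {\<gamma>. 0 \<le> \<gamma> \<and> (\<exists>C>0. \<forall>V \<in> carrier_mat (m + n) l. \<forall>r \<in> Xi m n c.
       ext_norm (m + n) l (wedge (m + n) l V) = 1 \<longrightarrow>
       (\<integral>\<^sup>+ \<theta>. inv_pow (ext_norm (m + n) l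
            (proj_plus m (m + n) l (ext_act (m + n) l (u_mat m n \<theta>) (wedge (m + n) l V)))) \<gamma>
          \<partial>mu_r m n \<mu> r) < ennreal C)})"

end

theory Submission
  imports Defs
begin

(* In Pluecker coordinates g_t is diagonal: it multiplies the coordinate of e_I by t raised to the
   sum of the exponents of g_t over I.  On V_l^+ this sum is at least w_l, because the a_i and the
   b_j are sorted, so |g_t u(x) v| >= t^(w_l) |pi_l+(u(x) v)|.  After normalising |v| = 1, pick
   eta_l < gamma < zeta_l(mu): the pointwise bound y^(-eta_l) <= 1 + y^(-gamma), the uniform bound
   C_l on the gamma-integrals defining zeta_l(mu) and the fact that mu^(r) has mass at most 1 bound
   the integral by (1 + C_l) t^(-w_l eta_l), and t^(-w_l eta_l) <= t^(-eta) for t > 1. *)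

lemma sets_hausdorff_prob: "sets (hausdorff_prob s K) = sets borel"
  unfolding hausdorff_prob_def using sets.sigma_sets_eq[of borel] by (simp add: sets_measure_of_conv)

lemma subprob_space_hausdorff_prob: "subprob_space (hausdorff_prob s K)"
proof
  have "x / x \<le> 1" for x :: ennreal
    by (cases "x = 0"; cases "x = \<infinity>") (auto simp: top.not_eq_extremum)
  then show "emeasure (hausdorff_prob s K) (space (hausdorff_prob s K)) \<le> 1"
    by (simp add: hausdorff_prob_def emeasure_measure_of_conv)
qed (simp add: hausdorff_prob_def space_measure_of_conv)

lemma subprob_space_PiM:
  assumes "finite I" and "\<And>i. subprob_space (M i)"
  shows "subprob_space (PiM I M)"
proof
  interpret product_sigma_finite M
    using assms(2) by (simp add: product_sigma_finite_def subprob_space_imp_sigma_finite)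
  have "emeasure (PiM I M) (space (PiM I M)) = (\<Prod>i\<in>I. emeasure (M i) (space (M i)))"
    unfolding space_PiM using assms(1) by (intro emeasure_PiM) auto
  also have "\<dots> \<le> (\<Prod>i\<in>I. 1)"
    by (intro prod_mono_ennreal subprob_space.emeasure_space_le_1 assms(2))
  finally show "emeasure (PiM I M) (space (PiM I M)) \<le> 1" by simp
  show "space (PiM I M) \<noteq> {}"
    using subprob_space.subprob_not_empty[OF assms(2)] by (simp add: space_PiM PiE_eq_empty_iff)
qed

lemma sets_mu_r: "sets (mu_r m n \<mu> r) = sets (PiM ({0..<m} \<times> {0..<n}) (\<lambda>_. borel))"
  unfolding mu_r_def by (rule sets_PiM_cong) auto

lemma subprob_space_mu_r:
  assumes "\<And>i j. subprob_space (\<mu> i j)" and "\<And>i j. sets (\<mu> i j) = sets borel"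
  shows "subprob_space (mu_r m n \<mu> r)"
  unfolding mu_r_def
proof (rule subprob_space_PiM)
  fix p :: "nat \<times> nat"
  obtain i j where p: "p = (i, j)" by force
  have "(\<lambda>x. r i j * x) \<in> borel_measurable (\<mu> i j)"
    by (subst measurable_cong_sets[OF assms(2) refl]) simp
  then show "subprob_space (case p of (i, j) \<Rightarrow> distr (\<mu> i j) borel (\<lambda>x. r i j * x))"
    unfolding p by (simp add: subprob_space.subprob_space_distr[OF assms(1)])
qed simp

section \<open>Pluecker coordinates\<close>

lemma finite_lsubsets: "finite (lsubsets d l)"
  unfolding lsubsets_def by (rule finite_subset[of _ "Pow {0..<d}"]) auto

lemma lsubsets_initial_segment: "l \<le> d \<Longrightarrow> {0..<l} \<in> lsubsets d l"
  unfolding lsubsets_def by auto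

lemma pick_lsubsets:
  assumes "I \<in> lsubsets d l" and "i < l"
  shows "pick I i \<in> I" and "pick I i < d"
  using assms pick_in_set_le[of i I] unfolding lsubsets_def by auto

lemma bij_betw_pick_lsubsets:
  assumes "I \<in> lsubsets d l"
  shows "bij_betw (pick I) {0..<l} I"
proof -
  have I: "card I = l" "finite I"
    using assms finite_lsubsets[of d l] unfolding lsubsets_def by (auto intro: finite_subset)
  have inj: "inj_on (pick I) {0..<l}"
    unfolding inj_on_def using pick_mono_le[of _ I] I
    by (metis atLeastLessThan_iff linorder_neqE_nat less_irrefl)
  have "pick I ` {0..<l} \<subseteq> I"
    using pick_lsubsets(1)[OF assms] by auto
  moreover have "card (pick I ` {0..<l}) = card I"
    using card_image[OF inj] I by simp
  ultimately show ?thesis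
    using inj I by (simp add: bij_betw_def card_subset_eq)
qed

lemma
  assumes "A \<in> carrier_mat d d" and "I \<in> lsubsets d l" and "J \<in> lsubsets d l"
  shows submatrix_lsubsets_carrier: "submatrix A I J \<in> carrier_mat l l"
    and index_submatrix_lsubsets:
      "\<And>i j. i < l \<Longrightarrow> j < l \<Longrightarrow> submatrix A I J $$ (i, j) = A $$ (pick I i, pick J j)"
proof -
  have "{i. i < d \<and> i \<in> I} = I" "{j. j < d \<and> j \<in> J} = J"
    using assms(2,3) unfolding lsubsets_def by auto
  moreover have "card I = l" "card J = l"
    using assms(2,3) unfolding lsubsets_def by auto
  ultimately show "submatrix A I J \<in> carrier_mat l l"
    "\<And>i j. i < l \<Longrightarrow> j < l \<Longrightarrow> submatrix A I J $$ (i, j) = A $$ (pick I i, pick J j)"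
    using assms(1) by (auto simp: submatrix_def)
qed

lemma abs_le_ext_norm: "I \<in> lsubsets d l \<Longrightarrow> \<bar>v I\<bar> \<le> ext_norm d l v"
  unfolding ext_norm_def by (rule Max_ge) (auto simp: finite_lsubsets)

lemma ext_norm_attained:
  assumes "l \<le> d"
  obtains I where "I \<in> lsubsets d l" and "ext_norm d l v = \<bar>v I\<bar>"
proof -
  have "ext_norm d l v \<in> (\<lambda>I. \<bar>v I\<bar>) ` lsubsets d l"
    unfolding ext_norm_def
    using lsubsets_initial_segment[OF assms] finite_lsubsets by (intro Max_in) auto
  then show ?thesis using that by blast
qed

lemma ext_norm_nonneg: "l \<le> d \<Longrightarrow> 0 \<le> ext_norm d l v"
  by (meson abs_ge_zero abs_le_ext_norm lsubsets_initial_segment order_trans)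

lemma ext_norm_scale:
  assumes "l \<le> d"
  shows "ext_norm d l (\<lambda>I. c * v I) = \<bar>c\<bar> * ext_norm d l v"
proof (rule antisym)
  obtain I where "I \<in> lsubsets d l" "ext_norm d l (\<lambda>I. c * v I) = \<bar>c * v I\<bar>"
    using ext_norm_attained[OF assms] .
  then show "ext_norm d l (\<lambda>I. c * v I) \<le> \<bar>c\<bar> * ext_norm d l v"
    using abs_le_ext_norm[of I d l v] by (simp add: abs_mult mult_left_mono)
next
  obtain I where "I \<in> lsubsets d l" "ext_norm d l v = \<bar>v I\<bar>"
    using ext_norm_attained[OF assms] .
  then show "\<bar>c\<bar> * ext_norm d l v \<le> ext_norm d l (\<lambda>I. c * v I)"
    using abs_le_ext_norm[of I d l "\<lambda>I. c * v I"] by (simp add: abs_mult)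
qed

lemma ext_norm_wedge_pos:
  assumes "wedge d l V \<noteq> (\<lambda>_. 0)"
  shows "0 < ext_norm d l (wedge d l V)"
proof -
  obtain I where I: "wedge d l V I \<noteq> 0"
    using assms by auto
  then have "I \<in> lsubsets d l"
    unfolding wedge_def by (auto split: if_splits)
  then show ?thesis
    using abs_le_ext_norm[of I d l "wedge d l V"] I by linarith
qed

lemma ext_act_scale: "ext_act d l A (\<lambda>I. c * v I) = (\<lambda>I. c * ext_act d l A v I)"
  unfolding ext_act_def by (auto simp: sum_distrib_left mult_ac)

lemma proj_plus_scale: "proj_plus m d l (\<lambda>I. c * v I) = (\<lambda>I. c * proj_plus m d l v I)"
  unfolding proj_plus_def by auto

lemma wedge_smult:
  assumes "V \<in> carrier_mat d l"
  shows "wedge d l (k \<cdot>\<^sub>m V) = (\<lambda>I. k ^ l * wedge d l V I)"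
proof -
  have "submatrix (k \<cdot>\<^sub>m V) I {0..<l} = k \<cdot>\<^sub>m submatrix V I {0..<l}" for I
  proof (rule eq_matI)
    fix i j
    assume "i < dim_row (k \<cdot>\<^sub>m submatrix V I {0..<l})" "j < dim_col (k \<cdot>\<^sub>m submatrix V I {0..<l})"
    then have "i < card {a. a < dim_row V \<and> a \<in> I}" "j < card {a. a < dim_col V \<and> a \<in> {0..<l}}"
      by (auto simp: dim_submatrix)
    then show "submatrix (k \<cdot>\<^sub>m V) I {0..<l} $$ (i, j) = (k \<cdot>\<^sub>m submatrix V I {0..<l}) $$ (i, j)"
      using pick_le by (simp add: submatrix_def)
  qed (auto simp: submatrix_def)
  moreover have "dim_col (submatrix V I {0..<l}) = l" for I
    using assms by (simp add: dim_submatrix)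
  ultimately show ?thesis
    unfolding wedge_def by (auto intro!: ext)
qed

lemma wedge_normalise:
  assumes V: "V \<in> carrier_mat d l" and l: "1 \<le> l" "l \<le> d" and nz: "wedge d l V \<noteq> (\<lambda>_. 0)"
  obtains V' where "V' \<in> carrier_mat d l" and "ext_norm d l (wedge d l V') = 1"
    and "wedge d l V = (\<lambda>I. ext_norm d l (wedge d l V) * wedge d l V' I)"
proof -
  define N where "N = ext_norm d l (wedge d l V)"
  have N: "0 < N"
    unfolding N_def using ext_norm_wedge_pos[OF nz] .
  have "(N powr (- 1 / l)) ^ l = (N powr (- 1 / l)) powr l"
    using N by (simp add: powr_realpow)
  also have "\<dots> = N powr (- 1)"
    using l by (simp add: powr_powr)
  also have "\<dots> = 1 / N"
    using N by (simp add: powr_minus_divide)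
  finally have wedge_V': "wedge d l (N powr (- 1 / l) \<cdot>\<^sub>m V) = (\<lambda>I. (1 / N) * wedge d l V I)"
    using wedge_smult[OF V] by simp
  show ?thesis
  proof (rule that)
    show "N powr (- 1 / l) \<cdot>\<^sub>m V \<in> carrier_mat d l"
      using V by simp
    show "ext_norm d l (wedge d l (N powr (- 1 / l) \<cdot>\<^sub>m V)) = 1"
      unfolding wedge_V' ext_norm_scale[OF l(2)] using N by (simp add: N_def)
    show "wedge d l V = (\<lambda>I. ext_norm d l (wedge d l V) * wedge d l (N powr (- 1 / l) \<cdot>\<^sub>m V) I)"
      unfolding wedge_V' N_def[symmetric] using N by simp
  qed
qed

lemma borel_measurable_det:
  assumes "\<And>x. A x \<in> carrier_mat k k"
    and "\<And>i j. i < k \<Longrightarrow> j < k \<Longrightarrow> (\<lambda>x. A x $$ (i, j) :: real) \<in> borel_measurable M"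
  shows "(\<lambda>x. det (A x)) \<in> borel_measurable M"
proof -
  have "(\<lambda>x. det (A x)) =
      (\<lambda>x. \<Sum>p\<in>{p. p permutes {0..<k}}. signof p * (\<Prod>i\<in>{0..<k}. A x $$ (i, p i)))"
    using det_def' assms(1) by blast
  moreover have "p permutes {0..<k} \<Longrightarrow> i < k \<Longrightarrow> p i < k" for p i
    using permutes_in_image[of p "{0..<k}" i] by auto
  ultimately show ?thesis
    by (auto intro!: borel_measurable_sum borel_measurable_times borel_measurable_prod assms(2))
qed

lemma borel_measurable_ext_act:
  assumes "\<And>x. A x \<in> carrier_mat d d"
    and "\<And>p q. p < d \<Longrightarrow> q < d \<Longrightarrow> (\<lambda>x. A x $$ (p, q)) \<in> borel_measurable M"
  shows "(\<lambda>x. ext_act d l (A x) w I) \<in> borel_measurable M"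
proof -
  have "(\<lambda>x. det (submatrix (A x) I J)) \<in> borel_measurable M"
    if "I \<in> lsubsets d l" "J \<in> lsubsets d l" for I J
    using that
    by (intro borel_measurable_det[where k = l] submatrix_lsubsets_carrier[OF assms(1) that])
      (simp add: index_submatrix_lsubsets[OF assms(1) that] assms(2) pick_lsubsets)
  then show ?thesis
    by (cases "I \<in> lsubsets d l") (auto simp: ext_act_def intro!: borel_measurable_sum borel_measurable_times)
qed

lemma borel_measurable_ext_norm:
  "(\<And>I. (\<lambda>x. v x I) \<in> borel_measurable M) \<Longrightarrow> (\<lambda>x. ext_norm d l (v x)) \<in> borel_measurable M"
  unfolding ext_norm_def by (intro borel_measurable_Max finite_lsubsets borel_measurable_abs)

lemma borel_measurable_inv_pow: "(\<lambda>x. inv_pow x \<gamma>) \<in> borel_measurable borel"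
  unfolding inv_pow_def by measurable

lemma u_mat_carrier_mat: "u_mat m n \<theta> \<in> carrier_mat (m + n) (m + n)"
  unfolding u_mat_def by simp

lemma borel_measurable_u_mat_index:
  assumes "p < m + n" and "q < m + n"
  shows "(\<lambda>\<theta>. u_mat m n \<theta> $$ (p, q)) \<in> borel_measurable (PiM ({0..<m} \<times> {0..<n}) (\<lambda>_. borel))"
proof (cases "p \<noteq> q \<and> p < m \<and> m \<le> q")
  case True
  then have "(p, q - m) \<in> {0..<m} \<times> {0..<n}"
    using assms by auto
  then show ?thesis
    unfolding u_mat_def using assms True by (simp add: measurable_component_singleton)
next
  case False
  then have "(\<lambda>\<theta>. u_mat m n \<theta> $$ (p, q)) = (\<lambda>_. if p = q then 1 else 0)"
    unfolding u_mat_def using assms by auto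
  then show ?thesis by simp
qed

lemma borel_measurable_inv_pow_proj_plus_u_mat:
  "(\<lambda>\<theta>. inv_pow (ext_norm (m + n) l (proj_plus m (m + n) l (ext_act (m + n) l (u_mat m n \<theta>) w))) \<gamma>)
     \<in> borel_measurable (PiM ({0..<m} \<times> {0..<n}) (\<lambda>_. borel))"
proof -
  have "(\<lambda>\<theta>. proj_plus m (m + n) l (ext_act (m + n) l (u_mat m n \<theta>) w) I)
      \<in> borel_measurable (PiM ({0..<m} \<times> {0..<n}) (\<lambda>_. borel))" for I
    by (cases "card (I \<inter> {0..<m}) = min l m")
      (auto simp: proj_plus_def u_mat_carrier_mat
        intro!: borel_measurable_ext_act borel_measurable_u_mat_index)
  then show ?thesis
    by (intro measurable_compose[OF _ borel_measurable_inv_pow] borel_measurable_ext_norm)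
qed

section \<open>The action of the diagonal flow\<close>

lemma det_mat_diag: "det (mat_diag n f) = (\<Prod>i\<in>{0..<n}. f i :: 'a :: comm_ring_1)"
proof -
  have "upper_triangular (mat_diag n f)"
    unfolding mat_diag_def by auto
  then show ?thesis
    by (subst det_upper_triangular[of _ n]) (auto simp: prod_list_diag_prod mat_diag_def)
qed

lemma ext_act_mat_diag_mult:
  assumes U: "U \<in> carrier_mat d d" and I: "I \<in> lsubsets d l"
  shows "ext_act d l (mat_diag d f * U) w I = (\<Prod>x\<in>I. f x) * ext_act d l U w I"
proof -
  have "det (submatrix (mat_diag d f * U) I J) = (\<Prod>x\<in>I. f x) * det (submatrix U I J)"
    if J: "J \<in> lsubsets d l" for J
  proof -
    have UIJ: "submatrix U I J \<in> carrier_mat l l"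
      by (rule submatrix_lsubsets_carrier[OF U I J])
    have DU: "mat d d (\<lambda>(i, j). f i * U $$ (i, j)) \<in> carrier_mat d d"
      by simp
    have "submatrix (mat_diag d f * U) I J = mat_diag l (\<lambda>i. f (pick I i)) * submatrix U I J"
      unfolding mat_diag_mult_left[OF U] mat_diag_mult_left[OF UIJ]
      using submatrix_lsubsets_carrier[OF DU I J] UIJ
      by (intro eq_matI) (auto simp: index_submatrix_lsubsets[OF _ I J] U pick_lsubsets[OF I]
          pick_lsubsets[OF J])
    then show ?thesis
      using U I J
      by (simp add: det_mult[of _ l] submatrix_lsubsets_carrier det_mat_diag
          prod.reindex_bij_betw[OF bij_betw_pick_lsubsets[OF I]])
  qed
  then show ?thesis
    unfolding ext_act_def using I by (simp add: sum_distrib_left mult_ac)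
qed

definition g_exponent :: "nat \<Rightarrow> (nat \<Rightarrow> real) \<Rightarrow> (nat \<Rightarrow> real) \<Rightarrow> nat \<Rightarrow> real" where
  "g_exponent m a b p = (if p < m then a p else - b (p - m))"

lemma g_mat_eq_mat_diag: "g_mat m n a b t = mat_diag (m + n) (\<lambda>p. t powr g_exponent m a b p)"
  unfolding g_mat_def mat_diag_def g_exponent_def by (intro eq_matI) auto

lemma sum_le_sum_initial_segment:
  fixes f :: "nat \<Rightarrow> real"
  assumes "\<forall>i j. i \<le> j \<and> j < N \<longrightarrow> f j \<le> f i" and "S \<subseteq> {0..<N}"
  shows "sum f S \<le> sum f {0..<card S}"
  using assms
proof (induction N arbitrary: S)
  case (Suc N)
  have anti: "\<forall>i j. i \<le> j \<and> j < N \<longrightarrow> f j \<le> f i"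
    using Suc.prems(1) by auto
  show ?case
  proof (cases "N \<in> S")
    case False
    then have "S \<subseteq> {0..<N}"
      using Suc.prems(2) by (auto simp: less_Suc_eq)
    then show ?thesis using Suc.IH anti by blast
  next
    case True
    have S': "S - {N} \<subseteq> {0..<N}"
      using Suc.prems(2) by (auto simp: less_Suc_eq)
    have fin: "finite S"
      using Suc.prems(2) finite_subset by blast
    have card: "card S = Suc (card (S - {N}))"
      using True fin by (metis card_Suc_Diff1)
    have "card (S - {N}) \<le> N"
      using card_mono[OF _ S'] by simp
    have "sum f S = f N + sum f (S - {N})"
      using True fin by (simp add: sum.remove)
    also have "\<dots> \<le> f (card (S - {N})) + sum f {0..<card (S - {N})}"
      using Suc.IH[OF anti S'] Suc.prems(1) \<open>card (S - {N}) \<le> N\<close> by (simp add: add_mono)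
    also have "\<dots> = sum f {0..<card S}"
      using card by simp
    finally show ?thesis .
  qed
qed simp

lemma sum_final_segment_le_sum:
  fixes f :: "nat \<Rightarrow> real"
  assumes "\<forall>i j. i \<le> j \<and> j < N \<longrightarrow> f j \<le> f i" and "S \<subseteq> {0..<N}"
  shows "sum f {N - card S..<N} \<le> sum f S"
proof -
  have "finite S"
    using assms(2) finite_subset by blast
  then have "card ({0..<N} - S) = N - card S"
    using assms(2) by (simp add: card_Diff_subset)
  then have "sum f ({0..<N} - S) \<le> sum f {0..<N - card S}"
    using sum_le_sum_initial_segment[OF assms(1), of "{0..<N} - S"] by auto
  moreover have "sum f {0..<N} = sum f S + sum f ({0..<N} - S)"
    using assms(2) sum.subset_diff[of S "{0..<N}" f] by (simp add: add.commute)
  moreover have "sum f {0..<N} = sum f {0..<N - card S} + sum f {N - card S..<N}"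
    using sum.atLeastLessThan_concat[of 0 "N - card S" N f] by simp
  ultimately show ?thesis by linarith
qed

lemma wl_le_sum_g_exponent:
  assumes anti_a: "\<forall>i j. i \<le> j \<and> j < m \<longrightarrow> a j \<le> a i" and sum_a: "(\<Sum>i<m. a i) = 1"
    and anti_b: "\<forall>i j. i \<le> j \<and> j < n \<longrightarrow> b j \<le> b i"
    and I: "I \<in> lsubsets (m + n) l" and plus: "card (I \<inter> {0..<m}) = min l m"
  shows "wl m a b l \<le> (\<Sum>x\<in>I. g_exponent m a b x)"
proof -
  have I_sub: "I \<subseteq> {0..<m + n}" and card_I: "card I = l"
    using I unfolding lsubsets_def by auto
  have fin: "finite I"
    using I_sub finite_subset by blast
  show ?thesis
  proof (cases "l \<le> m")
    case True
    then have "I \<subseteq> {0..<m}"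
      using plus card_I fin by (metis Int_lower1 card_subset_eq inf.absorb_iff1 min.absorb1)
    then have "(\<Sum>x\<in>I. g_exponent m a b x) = sum a I"
      by (intro sum.cong) (auto simp: g_exponent_def)
    then show ?thesis
      using sum_final_segment_le_sum[OF anti_a \<open>I \<subseteq> {0..<m}\<close>] True card_I by (simp add: wl_def)
  next
    case False
    then have "{0..<m} \<subseteq> I"
      using plus by (metis Int_lower2 card_atLeastLessThan card_subset_eq diff_zero finite_atLeastLessThan
          inf.absorb_iff2 min.absorb2 nle_le)
    define J where "J = (\<lambda>x. x - m) ` (I - {0..<m})"
    have inj: "inj_on (\<lambda>x. x - m) (I - {0..<m})"
      unfolding inj_on_def by auto
    have "card J = l - m"
      unfolding J_def card_image[OF inj]
      using \<open>{0..<m} \<subseteq> I\<close> fin card_I by (simp add: card_Diff_subset)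
    moreover have "J \<subseteq> {0..<n}"
      unfolding J_def using I_sub by auto
    ultimately have "sum b J \<le> sum b {0..<l - m}"
      using sum_le_sum_initial_segment[OF anti_b] by metis
    have "(\<Sum>x\<in>I. g_exponent m a b x)
        = (\<Sum>x\<in>{0..<m}. g_exponent m a b x) + (\<Sum>x\<in>I - {0..<m}. g_exponent m a b x)"
      using \<open>{0..<m} \<subseteq> I\<close> fin by (simp add: sum.subset_diff)
    also have "\<dots> = 1 - sum b J"
      using sum_a unfolding J_def sum.reindex[OF inj]
      by (simp add: g_exponent_def atLeast0LessThan sum_negf)
    finally show ?thesis
      using \<open>sum b J \<le> sum b {0..<l - m}\<close> False by (simp add: wl_def atLeast0LessThan)
  qed
qed

lemma ext_norm_g_mat_mult_ge:
  assumes t: "1 \<le> t"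
    and anti_a: "\<forall>i j. i \<le> j \<and> j < m \<longrightarrow> a j \<le> a i" and sum_a: "(\<Sum>i<m. a i) = 1"
    and anti_b: "\<forall>i j. i \<le> j \<and> j < n \<longrightarrow> b j \<le> b i"
    and l: "l \<le> m + n" and U: "U \<in> carrier_mat (m + n) (m + n)"
  shows "t powr wl m a b l * ext_norm (m + n) l (proj_plus m (m + n) l (ext_act (m + n) l U w))
     \<le> ext_norm (m + n) l (ext_act (m + n) l (g_mat m n a b t * U) w)"
proof -
  obtain I where I: "I \<in> lsubsets (m + n) l"
    and max: "ext_norm (m + n) l (proj_plus m (m + n) l (ext_act (m + n) l U w))
        = \<bar>proj_plus m (m + n) l (ext_act (m + n) l U w) I\<bar>"
    using ext_norm_attained[OF l] .
  show ?thesis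
  proof (cases "card (I \<inter> {0..<m}) = min l m")
    case False
    then show ?thesis
      using max ext_norm_nonneg[OF l] unfolding proj_plus_def by simp
  next
    case True
    have "finite I"
      using I finite_lsubsets[of "m + n" l] unfolding lsubsets_def by (auto intro: finite_subset)
    have "t powr wl m a b l * \<bar>ext_act (m + n) l U w I\<bar>
        \<le> t powr (\<Sum>x\<in>I. g_exponent m a b x) * \<bar>ext_act (m + n) l U w I\<bar>"
      using wl_le_sum_g_exponent[OF anti_a sum_a anti_b I True] t
      by (intro mult_right_mono powr_mono) auto
    also have "\<dots> = \<bar>ext_act (m + n) l (g_mat m n a b t * U) w I\<bar>"
      unfolding g_mat_eq_mat_diag ext_act_mat_diag_mult[OF U I] using t
      by (simp add: powr_sum abs_mult abs_prod)
    also have "\<dots> \<le> ext_norm (m + n) l (ext_act (m + n) l (g_mat m n a b t * U) w)"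
      by (rule abs_le_ext_norm[OF I])
    finally show ?thesis
      using max True unfolding proj_plus_def by simp
  qed
qed

lemma inv_pow_antimono:
  assumes "0 \<le> \<gamma>" and "0 \<le> y" and "y \<le> x"
  shows "inv_pow x \<gamma> \<le> inv_pow y \<gamma>"
  using assms by (auto simp: inv_pow_def intro!: ennreal_leI powr_mono2')

lemma inv_pow_mult:
  assumes "0 < c" and "0 \<le> x"
  shows "inv_pow (c * x) \<gamma> = ennreal (c powr - \<gamma>) * inv_pow x \<gamma>"
  using assms by (auto simp: inv_pow_def powr_mult ennreal_mult[symmetric] ennreal_mult_top)

lemma inv_pow_le_one_plus:
  assumes "0 \<le> \<eta>" and "\<eta> \<le> \<gamma>" and "0 \<le> x"
  shows "inv_pow x \<eta> \<le> 1 + inv_pow x \<gamma>"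
proof (cases "x = 0")
  case False
  with assms(3) have x: "0 < x" by simp
  have "x powr - \<eta> \<le> 1 + x powr - \<gamma>"
  proof (cases "x \<le> 1")
    case True
    then have "x powr - \<eta> \<le> x powr - \<gamma>"
      using x assms by (intro powr_mono') auto
    then show ?thesis by simp
  next
    case False
    then have "x powr - \<eta> \<le> 1"
      using assms(1) by (simp add: powr_minus_divide ge_one_powr_ge_zero)
    then show ?thesis
      using powr_ge_zero[of x "- \<gamma>"] by linarith
  qed
  then have "ennreal (x powr - \<eta>) \<le> ennreal (1 + x powr - \<gamma>)"
    by (rule ennreal_leI)
  then show ?thesis
    using x by (simp add: inv_pow_def ennreal_plus)
qed (simp add: inv_pow_def)

section \<open>The integral estimate\<close>

lemma inv_pow_ext_norm_g_mat_mult_le: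
  assumes t: "1 \<le> t"
    and anti_a: "\<forall>i j. i \<le> j \<and> j < m \<longrightarrow> a j \<le> a i" and sum_a: "(\<Sum>i<m. a i) = 1"
    and anti_b: "\<forall>i j. i \<le> j \<and> j < n \<longrightarrow> b j \<le> b i"
    and l: "l \<le> m + n" and U: "U \<in> carrier_mat (m + n) (m + n)"
    and \<eta>: "0 \<le> \<eta>" "\<eta> \<le> \<gamma>" and N: "0 < N"
  shows "inv_pow (ext_norm (m + n) l (ext_act (m + n) l (g_mat m n a b t * U) (\<lambda>I. N * w I))) \<eta>
    \<le> ennreal ((t powr wl m a b l * N) powr - \<eta>)
       * (1 + inv_pow (ext_norm (m + n) l (proj_plus m (m + n) l (ext_act (m + n) l U w))) \<gamma>)"
proof -
  define P where "P = ext_norm (m + n) l (proj_plus m (m + n) l (ext_act (m + n) l U w))"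
  define k where "k = t powr wl m a b l * N"
  have P: "0 \<le> P" and k: "0 < k"
    using ext_norm_nonneg[OF l] t N by (auto simp: P_def k_def)
  have "k * P \<le> ext_norm (m + n) l (ext_act (m + n) l (g_mat m n a b t * U) (\<lambda>I. N * w I))"
    using ext_norm_g_mat_mult_ge[OF t anti_a sum_a anti_b l U, of "\<lambda>I. N * w I"] N
    by (simp add: P_def k_def ext_act_scale proj_plus_scale ext_norm_scale[OF l] mult_ac)
  then have "inv_pow (ext_norm (m + n) l (ext_act (m + n) l (g_mat m n a b t * U) (\<lambda>I. N * w I))) \<eta>
      \<le> inv_pow (k * P) \<eta>"
    using \<eta> k P by (intro inv_pow_antimono) auto
  also have "\<dots> = ennreal (k powr - \<eta>) * inv_pow P \<eta>"
    by (rule inv_pow_mult[OF k P])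
  also have "\<dots> \<le> ennreal (k powr - \<eta>) * (1 + inv_pow P \<gamma>)"
    using \<eta> P by (intro mult_left_mono inv_pow_le_one_plus) auto
  finally show ?thesis
    unfolding P_def k_def .
qed

lemma less_crit_expD:
  assumes "ereal \<eta> < crit_exp m n c \<mu> l"
  shows "\<exists>\<gamma>>\<eta>. \<exists>C>0. \<forall>V\<in>carrier_mat (m + n) l. \<forall>r\<in>Xi m n c.
           ext_norm (m + n) l (wedge (m + n) l V) = 1 \<longrightarrow>
           (\<integral>\<^sup>+ \<theta>. inv_pow (ext_norm (m + n) l
              (proj_plus m (m + n) l (ext_act (m + n) l (u_mat m n \<theta>) (wedge (m + n) l V)))) \<gamma>
            \<partial>mu_r m n \<mu> r) < ennreal C"
  using assms unfolding crit_exp_def less_Sup_iff by auto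

lemma nn_integral_inv_pow_g_mat_u_mat_le:
  fixes M :: "(nat \<times> nat \<Rightarrow> real) measure"
  assumes M: "subprob_space M" "sets M = sets (PiM ({0..<m} \<times> {0..<n}) (\<lambda>_. borel))"
    and anti_a: "\<forall>i j. i \<le> j \<and> j < m \<longrightarrow> a j \<le> a i" and sum_a: "(\<Sum>i<m. a i) = 1"
    and anti_b: "\<forall>i j. i \<le> j \<and> j < n \<longrightarrow> b j \<le> b i"
    and l: "1 \<le> l" "l \<le> m + n" and \<eta>: "0 \<le> \<eta>" "\<eta> \<le> \<gamma>" and t: "1 \<le> t" and C: "0 \<le> C"
    and unit: "\<And>V'. V' \<in> carrier_mat (m + n) l \<Longrightarrow> ext_norm (m + n) l (wedge (m + n) l V') = 1 \<Longrightarrow>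
      (\<integral>\<^sup>+ \<theta>. inv_pow (ext_norm (m + n) l
          (proj_plus m (m + n) l (ext_act (m + n) l (u_mat m n \<theta>) (wedge (m + n) l V')))) \<gamma> \<partial>M)
        \<le> ennreal C"
    and V: "V \<in> carrier_mat (m + n) l" "wedge (m + n) l V \<noteq> (\<lambda>_. 0)"
  shows "(\<integral>\<^sup>+ x. inv_pow (ext_norm (m + n) l
            (ext_act (m + n) l (g_mat m n a b t * u_mat m n x) (wedge (m + n) l V))) \<eta> \<partial>M)
    \<le> ennreal ((1 + C) * t powr (- (wl m a b l * \<eta>))
        * ext_norm (m + n) l (wedge (m + n) l V) powr (- \<eta>))"
proof -
  define N where "N = ext_norm (m + n) l (wedge (m + n) l V)"
  have N: "0 < N"
    unfolding N_def using ext_norm_wedge_pos[OF V(2)] .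
  obtain V' where V': "V' \<in> carrier_mat (m + n) l" "ext_norm (m + n) l (wedge (m + n) l V') = 1"
    and V_V': "wedge (m + n) l V = (\<lambda>I. N * wedge (m + n) l V' I)"
    using wedge_normalise[OF V(1) l V(2)] unfolding N_def[symmetric] .
  define P where "P \<theta> = ext_norm (m + n) l
      (proj_plus m (m + n) l (ext_act (m + n) l (u_mat m n \<theta>) (wedge (m + n) l V')))" for \<theta>
  define k where "k = t powr wl m a b l * N"
  have pointwise: "inv_pow (ext_norm (m + n) l
        (ext_act (m + n) l (g_mat m n a b t * u_mat m n \<theta>) (wedge (m + n) l V))) \<eta>
      \<le> ennreal (k powr - \<eta>) * (1 + inv_pow (P \<theta>) \<gamma>)" for \<theta>
    unfolding V_V' k_def P_def
    by (rule inv_pow_ext_norm_g_mat_mult_le[OF t anti_a sum_a anti_b l(2) u_mat_carrier_mat \<eta> N])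
  have "(\<lambda>\<theta>. inv_pow (P \<theta>) \<gamma>) \<in> borel_measurable M"
    unfolding P_def measurable_cong_sets[OF M(2) refl]
    by (rule borel_measurable_inv_pow_proj_plus_u_mat)
  then have "(\<integral>\<^sup>+ \<theta>. ennreal (k powr - \<eta>) * (1 + inv_pow (P \<theta>) \<gamma>) \<partial>M)
      = ennreal (k powr - \<eta>) * (emeasure M (space M) + (\<integral>\<^sup>+ \<theta>. inv_pow (P \<theta>) \<gamma> \<partial>M))"
    by (simp add: nn_integral_cmult nn_integral_add)
  also have "\<dots> \<le> ennreal (k powr - \<eta>) * ennreal (1 + C)"
    using subprob_space.emeasure_space_le_1[OF M(1)] unit[OF V'] C
    unfolding P_def by (intro mult_left_mono) (auto simp: ennreal_plus intro: add_mono)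
  also have "\<dots> = ennreal ((1 + C) * t powr (- (wl m a b l * \<eta>)) * N powr (- \<eta>))"
    using t N C by (simp add: k_def powr_mult powr_powr ennreal_mult mult_ac)
  finally show ?thesis
    unfolding N_def[symmetric] using nn_integral_mono[OF pointwise, of M] by (rule order_trans[rotated])
qed

lemma nn_integral_inv_pow_g_mat_u_mat_le_crit_exp:
  assumes \<mu>: "\<And>i j. subprob_space (\<mu> i j)" "\<And>i j. sets (\<mu> i j) = sets borel"
    and anti_a: "\<forall>i j. i \<le> j \<and> j < m \<longrightarrow> a j \<le> a i" and sum_a: "(\<Sum>i<m. a i) = 1"
    and anti_b: "\<forall>i j. i \<le> j \<and> j < n \<longrightarrow> b j \<le> b i"
    and l: "1 \<le> l" "l \<le> m + n" and \<eta>: "0 \<le> \<eta>" "ereal \<eta> < crit_exp m n c \<mu> l"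
  shows "\<exists>C>0. \<forall>r\<in>Xi m n c. \<forall>t\<ge>1. \<forall>V\<in>carrier_mat (m + n) l. wedge (m + n) l V \<noteq> (\<lambda>_. 0) \<longrightarrow>
           (\<integral>\<^sup>+ x. inv_pow (ext_norm (m + n) l
              (ext_act (m + n) l (g_mat m n a b t * u_mat m n x) (wedge (m + n) l V))) \<eta>
            \<partial>mu_r m n \<mu> r)
           \<le> ennreal (C * t powr (- (wl m a b l * \<eta>)) * ext_norm (m + n) l (wedge (m + n) l V) powr (- \<eta>))"
proof -
  obtain \<gamma> C where "\<eta> < \<gamma>" "0 < C" and unit: "\<forall>V\<in>carrier_mat (m + n) l. \<forall>r\<in>Xi m n c.
      ext_norm (m + n) l (wedge (m + n) l V) = 1 \<longrightarrow>
      (\<integral>\<^sup>+ \<theta>. inv_pow (ext_norm (m + n) l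
         (proj_plus m (m + n) l (ext_act (m + n) l (u_mat m n \<theta>) (wedge (m + n) l V)))) \<gamma>
       \<partial>mu_r m n \<mu> r) < ennreal C"
    using less_crit_expD[OF \<eta>(2)] by blast
  show ?thesis
  proof (intro exI[of _ "1 + C"] conjI ballI allI impI)
    fix r and t :: real and V
    assume "r \<in> Xi m n c" "1 \<le> t" "V \<in> carrier_mat (m + n) l" "wedge (m + n) l V \<noteq> (\<lambda>_. 0)"
    then show "(\<integral>\<^sup>+ x. inv_pow (ext_norm (m + n) l
              (ext_act (m + n) l (g_mat m n a b t * u_mat m n x) (wedge (m + n) l V))) \<eta>
            \<partial>mu_r m n \<mu> r)
           \<le> ennreal ((1 + C) * t powr (- (wl m a b l * \<eta>))
               * ext_norm (m + n) l (wedge (m + n) l V) powr (- \<eta>))"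
      using unit \<open>\<eta> < \<gamma>\<close> \<open>0 < C\<close>
      by (intro nn_integral_inv_pow_g_mat_u_mat_le[where \<gamma> = \<gamma>] subprob_space_mu_r sets_mu_r
          anti_a sum_a anti_b l \<eta>(1) \<mu>) (auto intro: less_imp_le)
  qed (use \<open>0 < C\<close> in simp)
qed

theorem proposition5p1:
  fixes m n :: nat and a b :: "nat \<Rightarrow> real"
    and c :: "nat \<Rightarrow> nat \<Rightarrow> real" and W K :: "nat \<Rightarrow> nat \<Rightarrow> real set"
    and s :: "nat \<Rightarrow> nat \<Rightarrow> real" and \<eta>l :: "nat \<Rightarrow> real"
  assumes "1 \<le> m" and "1 \<le> n"
    and "\<forall>i<m. 0 < a i" and "\<forall>i j. i \<le> j \<and> j < m \<longrightarrow> a j \<le> a i" and "(\<Sum>i<m. a i) = 1"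
    and "\<forall>j<n. 0 < b j" and "\<forall>i j. i \<le> j \<and> j < n \<longrightarrow> b j \<le> b i" and "(\<Sum>j<n. b j) = 1"
    and "\<forall>i<m. \<forall>j<n. 0 < c i j \<and> c i j < 1 \<and> finite (W i j) \<and> open_set_condition (c i j) (W i j)
           \<and> is_limit_set (c i j) (W i j) (K i j) \<and> s i j = hausdorff_dim (K i j) \<and> 0 < s i j"
    and "\<forall>l\<in>{1..m + n - 1}. 0 < \<eta>l l \<and>
           ereal (\<eta>l l) < crit_exp m n c (\<lambda>i j. hausdorff_prob (s i j) (K i j)) l"
  shows "\<exists>C>0. \<forall>l\<in>{1..m + n - 1}. \<forall>r\<in>Xi m n c. \<forall>t>1. \<forall>V \<in> carrier_mat (m + n) l.
           wedge (m + n) l V \<noteq> (\<lambda>_. 0) \<longrightarrow>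
           (\<integral>\<^sup>+ x. inv_pow (ext_norm (m + n) l
                 (ext_act (m + n) l (g_mat m n a b t * u_mat m n x) (wedge (m + n) l V))) (\<eta>l l)
              \<partial>mu_r m n (\<lambda>i j. hausdorff_prob (s i j) (K i j)) r)
           \<le> ennreal (C * t powr (- Min ((\<lambda>k. wl m a b k * \<eta>l k) ` {1..m + n - 1}))
                        * ext_norm (m + n) l (wedge (m + n) l V) powr (- \<eta>l l))"
proof -
  let ?L = "{1..m + n - 1}"
  let ?\<eta> = "Min ((\<lambda>k. wl m a b k * \<eta>l k) ` ?L)"
  define I where "I l r t V = (\<integral>\<^sup>+ x. inv_pow (ext_norm (m + n) l
      (ext_act (m + n) l (g_mat m n a b t * u_mat m n x) (wedge (m + n) l V))) (\<eta>l l)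
    \<partial>mu_r m n (\<lambda>i j. hausdorff_prob (s i j) (K i j)) r)" for l r t V
  define N where "N l V = ext_norm (m + n) l (wedge (m + n) l V)" for l V
  have "\<forall>l\<in>?L. \<exists>C>0. \<forall>r\<in>Xi m n c. \<forall>t\<ge>1. \<forall>V\<in>carrier_mat (m + n) l. wedge (m + n) l V \<noteq> (\<lambda>_. 0) \<longrightarrow>
      I l r t V \<le> ennreal (C * t powr (- (wl m a b l * \<eta>l l)) * N l V powr (- \<eta>l l))"
    unfolding I_def N_def using assms(4,5,7,10)
    by (intro ballI nn_integral_inv_pow_g_mat_u_mat_le_crit_exp subprob_space_hausdorff_prob
        sets_hausdorff_prob) (auto intro: less_imp_le)
  from bchoice[OF this] obtain C where C: "\<forall>l\<in>?L. 0 < C l \<and> (\<forall>r\<in>Xi m n c. \<forall>t\<ge>1.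
      \<forall>V\<in>carrier_mat (m + n) l. wedge (m + n) l V \<noteq> (\<lambda>_. 0) \<longrightarrow>
      I l r t V \<le> ennreal (C l * t powr (- (wl m a b l * \<eta>l l)) * N l V powr (- \<eta>l l)))" ..
  have C_Max: "0 < C l \<and> C l \<le> Max (C ` ?L)" if "l \<in> ?L" for l
    using C that by (auto intro: Max_ge)
  show ?thesis
    unfolding I_def[symmetric] N_def[symmetric]
  proof (intro exI[of _ "Max (C ` ?L)"] conjI ballI allI impI)
    have "1 \<in> ?L"
      using assms(1,2) by simp
    then show "0 < Max (C ` ?L)"
      using C_Max[of 1] by linarith
    fix l r and t :: real and V
    assume l: "l \<in> ?L" and "r \<in> Xi m n c" "1 < t" "V \<in> carrier_mat (m + n) l"
      "wedge (m + n) l V \<noteq> (\<lambda>_. 0)"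
    then have "I l r t V \<le> ennreal (C l * t powr (- (wl m a b l * \<eta>l l)) * N l V powr (- \<eta>l l))"
      using C by simp
    also have "\<dots> \<le> ennreal (Max (C ` ?L) * t powr (- ?\<eta>) * N l V powr (- \<eta>l l))"
      using C_Max[OF l] l \<open>1 < t\<close>
      by (intro ennreal_leI mult_right_mono mult_mono powr_mono) (auto intro: order_trans[of 0 "C l"])
    finally show "I l r t V \<le> ennreal (Max (C ` ?L) * t powr (- ?\<eta>) * N l V powr (- \<eta>l l))" .
  qed
qed

end
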